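(* There exist absolute constants $c_1>0$ and $c_2>0$ such that for all integers $d\ge 2$, all integers $n\ge (c_1 d)^{\frac{d-1}{2}}$, and all polytopes $P_n\subset B_2^d$ having $n$ vertices, $$ \mathrm{vol}_d(B_2^d)-\mathrm{vol}_d(P_n)\ \ge\ c_2\, d\, \mathrm{vol}_d(B_2^d)\, n^{-\frac{2}{d-1}} . $$
   Context: $B_2^d$ denotes the closed Euclidean unit ball in $\mathbb{R}^d$ and $\mathrm{vol}_d$ the $d$-dimensional Lebesgue measure. *)

theory Defs
  imports "HOL-Analysis.Analysis" "HOL-Probability.Probability"
begin

text \<open>Points of R^d are modelled as extensional functions in PiE {..<d} (\<lambda>_. UNIV),
  i.e. the space of the product measure below.\<close>

definition Rd :: "nat \<Rightarrow> (nat \<Rightarrow> real) set" where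
  "Rd d = PiE {..<d} (\<lambda>_. UNIV)"

definition lebesgue_d :: "nat \<Rightarrow> (nat \<Rightarrow> real) measure" where
  "lebesgue_d d = Pi\<^sub>M {..<d} (\<lambda>_. lborel)"

definition vol :: "nat \<Rightarrow> (nat \<Rightarrow> real) set \<Rightarrow> real" where
  "vol d S = measure (lebesgue_d d) S"

definition unit_ball :: "nat \<Rightarrow> (nat \<Rightarrow> real) set" where
  "unit_ball d = {x \<in> Rd d. (\<Sum>i<d. (x i)\<^sup>2) \<le> 1}"

definition conv_hull :: "nat \<Rightarrow> (nat \<Rightarrow> real) set \<Rightarrow> (nat \<Rightarrow> real) set" where
  "conv_hull d V = {x \<in> Rd d. \<exists>w. (\<forall>v\<in>V. 0 \<le> w v) \<and> (\<Sum>v\<in>V. w v) = 1 \<and>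
       (\<forall>i<d. x i = (\<Sum>v\<in>V. w v * v i))}"

text \<open>P is a polytope in R^d with exactly n vertices: the convex hull of a finite set V
  of n points none of which lies in the convex hull of the others (so V is the vertex set).\<close>
definition polytope_n_vertices :: "nat \<Rightarrow> (nat \<Rightarrow> real) set \<Rightarrow> nat \<Rightarrow> bool" where
  "polytope_n_vertices d P n \<longleftrightarrow> (\<exists>V. finite V \<and> card V = n \<and> V \<subseteq> Rd d \<and>
       P = conv_hull d V \<and> (\<forall>v\<in>V. v \<notin> conv_hull d (V - {v})))"

end

theory Submission
  imports Defs
begin

text \<open>Put \<open>h = n powr (-2 / (d - 1)) / 8192\<close>. For a point \<open>x\<close> of \<open>P = conv V\<close>, \<open>|x|^2\<close> is a convex
  combination of the inner products \<open><x, v>\<close> over the vertices, so if \<open>|x|^2 > 1 - h\<close> then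
  \<open><x, v> \<ge> 1 - h\<close> for some vertex \<open>v\<close>. Hence \<open>P\<close> is covered by the ball of radius \<open>sqrt (1 - h)\<close>
  and the \<open>n\<close> caps \<open>{x \<in> B. <x, v> \<ge> 1 - h}\<close>. Each cap lies in a cylinder of radius \<open>sqrt (2 * h)\<close>
  and axial length at most \<open>2 * d * h\<close>, so its volume is at most
  \<open>2 * d^2 * h * (2 * h) powr ((d - 1) / 2) * vol B\<close>; by the choice of \<open>h\<close> all \<open>n\<close> caps together
  have volume at most \<open>d * h * vol B / 8\<close>. The shell between the radii \<open>sqrt (1 - h)\<close> and \<open>1\<close> has
  volume at least \<open>d * h * vol B / 4\<close>, so \<open>P\<close> misses at least \<open>d * h * vol B / 8\<close> of the ball.\<close>

section \<open>Lebesgue measure on finite products of the real line\<close>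

abbreviation lborel_Pi :: "'i set \<Rightarrow> ('i \<Rightarrow> real) measure" where
  "lborel_Pi I \<equiv> Pi\<^sub>M I (\<lambda>_. lborel)"

lemma nn_integral_lborel_Pi_translate:
  assumes "finite I" and "f \<in> borel_measurable (lborel_Pi I)"
  shows "(\<integral>\<^sup>+x. f x \<partial>lborel_Pi I) = (\<integral>\<^sup>+x. f (\<lambda>i\<in>I. x i + a i) \<partial>lborel_Pi I)"
  using assms
proof (induction I arbitrary: f rule: finite_induct)
  case empty
  show ?case
    by (rule nn_integral_cong) (auto simp: space_PiM)
next
  case (insert i I f)
  interpret product_sigma_finite "\<lambda>_. lborel" by standard
  note [measurable] = insert.prems
  have "(\<integral>\<^sup>+x. f x \<partial>lborel_Pi (insert i I)) = (\<integral>\<^sup>+x. (\<integral>\<^sup>+t. f (x(i := t)) \<partial>lborel) \<partial>lborel_Pi I)"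
    by (rule product_nn_integral_insert) (use insert in auto)
  also have "\<dots> = (\<integral>\<^sup>+x. (\<integral>\<^sup>+t. f (x(i := a i + 1 * t)) \<partial>lborel) \<partial>lborel_Pi I)"
  proof (rule nn_integral_cong)
    fix x assume "x \<in> space (lborel_Pi I)"
    then have "(\<lambda>t. f (x(i := t))) \<in> borel_measurable borel"
      using measurable_comp[OF measurable_component_update insert.prems] \<open>i \<notin> I\<close>
      by (simp add: comp_def)
    from nn_integral_real_affine[OF this, of 1 "a i"]
    show "(\<integral>\<^sup>+t. f (x(i := t)) \<partial>lborel) = (\<integral>\<^sup>+t. f (x(i := a i + 1 * t)) \<partial>lborel)"
      by simp
  qed
  also have "\<dots> = (\<integral>\<^sup>+x. (\<lambda>x. \<integral>\<^sup>+t. f (x(i := a i + 1 * t)) \<partial>lborel) (\<lambda>k\<in>I. x k + a k) \<partial>lborel_Pi I)"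
    by (rule insert.IH) (use \<open>i \<notin> I\<close> in measurable)
  also have "\<dots> = (\<integral>\<^sup>+x. (\<integral>\<^sup>+t. f (\<lambda>k\<in>insert i I. (x(i := t)) k + a k) \<partial>lborel) \<partial>lborel_Pi I)"
    by (intro nn_integral_cong arg_cong[where f=f] ext) (auto simp: restrict_def)
  also have "\<dots> = (\<integral>\<^sup>+x. f (\<lambda>k\<in>insert i I. x k + a k) \<partial>lborel_Pi (insert i I))"
    by (rule product_nn_integral_insert[symmetric]) (use insert in auto)
  finally show ?case .
qed

lemma emeasure_lborel_Pi_cball:
  assumes "finite A" "r > 0"
  shows "emeasure (lborel_Pi A) {x \<in> space (lborel_Pi A). (\<Sum>i\<in>A. (x i - c i)\<^sup>2) \<le> r\<^sup>2}
     = ennreal (unit_ball_vol (card A) * r ^ card A)"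
proof -
  let ?S = "\<lambda>c. {x \<in> space (lborel_Pi A). (\<Sum>i\<in>A. (x i - c i)\<^sup>2) \<le> r\<^sup>2}"
  have S: "?S c \<in> sets (lborel_Pi A)"
    using assms(1) by measurable
  have "emeasure (lborel_Pi A) (?S c) = (\<integral>\<^sup>+x. indicator (?S c) x \<partial>lborel_Pi A)"
    using S by simp
  also have "\<dots> = (\<integral>\<^sup>+x. indicator (?S c) (\<lambda>i\<in>A. x i + c i) \<partial>lborel_Pi A)"
    by (rule nn_integral_lborel_Pi_translate) (use assms(1) S in auto)
  also have "\<dots> = (\<integral>\<^sup>+x. indicator (?S (\<lambda>_. 0)) x \<partial>lborel_Pi A)"
  proof (rule nn_integral_cong)
    fix x assume "x \<in> space (lborel_Pi A)"
    moreover have "(\<Sum>i\<in>A. ((\<lambda>i\<in>A. x i + c i) i - c i)\<^sup>2) = (\<Sum>i\<in>A. (x i)\<^sup>2)"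
      by (rule sum.cong) auto
    moreover have "(\<lambda>i\<in>A. x i + c i) \<in> space (lborel_Pi A)"
      by (simp add: space_PiM)
    ultimately show "indicator (?S c) (\<lambda>i\<in>A. x i + c i) = (indicator (?S (\<lambda>_. 0)) x :: ennreal)"
      unfolding indicator_def by simp
  qed
  also have "?S (\<lambda>_. 0) = {f. sqrt (\<Sum>i\<in>A. (f i)\<^sup>2) \<le> r} \<inter> space (lborel_Pi A)"
    using assms(2) by (auto simp: real_sqrt_le_iff' sum_nonneg)
  also have "(\<integral>\<^sup>+x. indicator \<dots> x \<partial>lborel_Pi A) = ennreal (unit_ball_vol (card A) * r ^ card A)"
    using emeasure_cball_aux[OF assms] assms(1) by simp
  finally show ?thesis .
qed

lemma emeasure_lborel_Pi_constant_slices: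
  assumes I: "finite I" "j \<in> I"
    and E: "E \<in> sets (lborel_Pi I)" and B: "B \<in> sets (lborel_Pi (I - {j}))"
    and slice: "\<And>y. y \<in> space (lborel_Pi (I - {j})) \<Longrightarrow>
      emeasure lborel {t. y(j := t) \<in> E} = (if y \<in> B then ennreal L else 0)"
  shows "emeasure (lborel_Pi I) E = ennreal L * emeasure (lborel_Pi (I - {j})) B"
proof -
  interpret product_sigma_finite "\<lambda>_. lborel" by standard
  have I_eq: "insert j (I - {j}) = I"
    using I by auto
  have "emeasure (lborel_Pi I) E = (\<integral>\<^sup>+x. indicator E x \<partial>lborel_Pi I)"
    using E by simp
  also have "\<dots> = (\<integral>\<^sup>+x. indicator E x \<partial>lborel_Pi (insert j (I - {j})))"
    by (simp only: I_eq)
  also have "\<dots> = (\<integral>\<^sup>+y. (\<integral>\<^sup>+t. indicator E (y(j := t)) \<partial>lborel) \<partial>lborel_Pi (I - {j}))"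
    by (rule product_nn_integral_insert) (use I E I_eq in auto)
  also have "\<dots> = (\<integral>\<^sup>+y. ennreal L * indicator B y \<partial>lborel_Pi (I - {j}))"
  proof (rule nn_integral_cong)
    fix y assume y: "y \<in> space (lborel_Pi (I - {j}))"
    have "(\<lambda>t. y(j := t)) \<in> measurable lborel (lborel_Pi I)"
      using measurable_component_update[OF y, of j] I_eq by simp
    from measurable_sets[OF this E] have "{t. y(j := t) \<in> E} \<in> sets lborel"
      by (simp add: vimage_def Collect_conj_eq[symmetric])
    then have "(\<integral>\<^sup>+t. indicator E (y(j := t)) \<partial>lborel) = emeasure lborel {t. y(j := t) \<in> E}"
      by (simp flip: nn_integral_indicator add: indicator_def)
    then show "(\<integral>\<^sup>+t. indicator E (y(j := t)) \<partial>lborel) = ennreal L * indicator B y"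
      using slice[OF y] by (simp add: indicator_def)
  qed
  also have "\<dots> = ennreal L * emeasure (lborel_Pi (I - {j})) B"
    using B by (rule nn_integral_cmult_indicator)
  finally show ?thesis .
qed

lemma emeasure_lborel_affine_strip:
  fixes a s lo hi :: real
  assumes "a \<noteq> 0" "lo \<le> hi"
  shows "emeasure lborel {t. lo \<le> t * a + s \<and> t * a + s \<le> hi} = ennreal ((hi - lo) / \<bar>a\<bar>)"
proof (cases "a > 0")
  case True
  then have "{t. lo \<le> t * a + s \<and> t * a + s \<le> hi} = {(lo - s) / a .. (hi - s) / a}"
    by (auto simp: field_simps)
  moreover have "(lo - s) / a \<le> (hi - s) / a"
    using True assms(2) by (simp add: divide_right_mono)
  moreover have "(hi - s) / a - (lo - s) / a = (hi - lo) / \<bar>a\<bar>"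
    using True by (simp add: field_simps)
  ultimately show ?thesis
    by simp
next
  case False
  with assms(1) have "a < 0" by simp
  then have "{t. lo \<le> t * a + s \<and> t * a + s \<le> hi} = {(hi - s) / a .. (lo - s) / a}"
    by (auto simp: field_simps)
  moreover have "(hi - s) / a \<le> (lo - s) / a"
    using \<open>a < 0\<close> assms(2) by (simp add: divide_right_mono_neg)
  moreover have "(lo - s) / a - (hi - s) / a = (hi - lo) / \<bar>a\<bar>"
    using \<open>a < 0\<close> by (simp add: field_simps)
  ultimately show ?thesis
    by simp
qed

lemma emeasure_lborel_Pi_oblique_cylinder:
  assumes I: "finite I" "j \<in> I" and "v j \<noteq> 0" "\<rho> > 0" "lo \<le> hi"
  shows "emeasure (lborel_Pi I) {x \<in> space (lborel_Pi I). (\<Sum>i\<in>I - {j}. (x i - c i)\<^sup>2) \<le> \<rho>\<^sup>2 \<and>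
           lo \<le> (\<Sum>i\<in>I. x i * v i) \<and> (\<Sum>i\<in>I. x i * v i) \<le> hi}
    = ennreal ((hi - lo) / \<bar>v j\<bar> * unit_ball_vol (card I - 1) * \<rho> ^ (card I - 1))"
    (is "emeasure _ ?E = _")
proof -
  let ?B = "{y \<in> space (lborel_Pi (I - {j})). (\<Sum>i\<in>I - {j}. (y i - c i)\<^sup>2) \<le> \<rho>\<^sup>2}"
  have "emeasure (lborel_Pi I) ?E = ennreal ((hi - lo) / \<bar>v j\<bar>) * emeasure (lborel_Pi (I - {j})) ?B"
  proof (rule emeasure_lborel_Pi_constant_slices[OF I])
    show "?E \<in> sets (lborel_Pi I)" "?B \<in> sets (lborel_Pi (I - {j}))"
      using I(1) by measurable
    fix y assume y: "y \<in> space (lborel_Pi (I - {j}))"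
    have "(\<Sum>i\<in>I. (y(j := t)) i * v i) = t * v j + (\<Sum>i\<in>I - {j}. y i * v i)" for t
      using I by (simp add: sum.remove)
    moreover have "(\<Sum>i\<in>I - {j}. ((y(j := t)) i - c i)\<^sup>2) = (\<Sum>i\<in>I - {j}. (y i - c i)\<^sup>2)" for t
      by (intro sum.cong) auto
    moreover have "y(j := t) \<in> space (lborel_Pi I)" for t
      using y I by (auto simp: space_PiM PiE_def extensional_def)
    ultimately have "{t. y(j := t) \<in> ?E} = (if y \<in> ?B then
        {t. lo \<le> t * v j + (\<Sum>i\<in>I - {j}. y i * v i) \<and> t * v j + (\<Sum>i\<in>I - {j}. y i * v i) \<le> hi} else {})"
      using y by auto
    then show "emeasure lborel {t. y(j := t) \<in> ?E} = (if y \<in> ?B then ennreal ((hi - lo) / \<bar>v j\<bar>) else 0)"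
      using emeasure_lborel_affine_strip[OF \<open>v j \<noteq> 0\<close> \<open>lo \<le> hi\<close>] by simp
  qed
  also have "emeasure (lborel_Pi (I - {j})) ?B = ennreal (unit_ball_vol (card I - 1) * \<rho> ^ (card I - 1))"
    using emeasure_lborel_Pi_cball[of "I - {j}" \<rho> c] I \<open>\<rho> > 0\<close> by simp
  also have "ennreal ((hi - lo) / \<bar>v j\<bar>) * \<dots> = ennreal ((hi - lo) / \<bar>v j\<bar> * (unit_ball_vol (card I - 1) * \<rho> ^ (card I - 1)))"
    using \<open>\<rho> > 0\<close> \<open>lo \<le> hi\<close> by (intro ennreal_mult[symmetric]) auto
  finally show ?thesis
    by (simp only: mult.assoc)
qed

section \<open>Volumes of balls\<close>

lemma space_lborel_Pi_lessThan: "space (lborel_Pi {..<d}) = Rd d"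
  by (simp add: space_PiM Rd_def)

lemma vol_eq_measure: "vol d S = measure (lborel_Pi {..<d}) S"
  by (simp add: vol_def lebesgue_d_def)

lemma sets_unit_ball: "unit_ball d \<in> sets (lborel_Pi {..<d})"
  unfolding unit_ball_def space_lborel_Pi_lessThan[symmetric] by measurable

lemma emeasure_centered_ball:
  assumes "r > 0"
  shows "emeasure (lborel_Pi {..<d}) {x \<in> Rd d. (\<Sum>i<d. (x i)\<^sup>2) \<le> r\<^sup>2} = ennreal (unit_ball_vol d * r ^ d)"
  using emeasure_lborel_Pi_cball[of "{..<d}" r "\<lambda>_. 0"] assms
  by (simp add: space_lborel_Pi_lessThan)

lemma emeasure_unit_ball: "emeasure (lborel_Pi {..<d}) (unit_ball d) = ennreal (unit_ball_vol d)"
  using emeasure_centered_ball[of 1 d] by (simp add: unit_ball_def)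

lemma vol_unit_ball: "vol d (unit_ball d) = unit_ball_vol d"
  by (simp add: vol_eq_measure measure_def emeasure_unit_ball)

lemma power_sqrt_one_minus_inverse_square_ge: "1 / 2 \<le> sqrt (1 - 1 / real (Suc m) ^ 2) ^ m"
proof -
  define y where "y = 1 - 1 / real (Suc m) ^ 2"
  have y: "0 \<le> y" "y \<le> 1"
    by (auto simp: y_def field_simps)
  have "2 * real m \<le> real (Suc m) ^ 2"
    by (simp add: power2_eq_square algebra_simps)
  then have "1 / 2 \<le> 1 + real m * (- (1 / real (Suc m) ^ 2))"
    by (simp add: field_simps)
  also have "\<dots> \<le> y ^ m"
    using Bernoulli_inequality[of "- (1 / real (Suc m) ^ 2)" m] by (simp add: y_def)
  also have "\<dots> \<le> sqrt y ^ m"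
    using y by (intro power_mono real_le_rsqrt) (auto simp: power2_eq_square mult_left_le)
  finally show ?thesis
    by (simp add: y_def)
qed

text \<open>For \<open>d = m + 1\<close>, the cylinder \<open>\<bar>x 0\<bar> \<le> 1 / d\<close> over the \<open>m\<close>-ball of radius
  \<open>r = sqrt (1 - 1 / d^2)\<close> lies in the unit \<open>d\<close>-ball, and \<open>r ^ m \<ge> 1 / 2\<close>.\<close>

lemma unit_ball_vol_le_Suc: "unit_ball_vol (real m) \<le> real (Suc m) * unit_ball_vol (real (Suc m))"
proof (cases "m = 0")
  case False
  define d where "d = Suc m"
  define r where "r = sqrt (1 - 1 / real d ^ 2)"
  define \<delta> :: "nat \<Rightarrow> real" where "\<delta> i = (if i = 0 then 1 else 0)" for i
  have d: "real d \<ge> 2" "r > 0"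
    using False by (auto simp: d_def r_def field_simps)
  have sum_\<delta>: "(\<Sum>i<d. x i * \<delta> i) = x 0" for x
  proof -
    have "(\<Sum>i<d. x i * \<delta> i) = (\<Sum>i<d. if i = 0 then x i else 0)"
      by (rule sum.cong) (auto simp: \<delta>_def)
    then show ?thesis
      by (simp add: d_def)
  qed
  let ?F = "{x \<in> space (lborel_Pi {..<d}). (\<Sum>i\<in>{..<d} - {0}. (x i - 0)\<^sup>2) \<le> r\<^sup>2 \<and>
     - (1 / real d) \<le> (\<Sum>i\<in>{..<d}. x i * \<delta> i) \<and> (\<Sum>i\<in>{..<d}. x i * \<delta> i) \<le> 1 / real d}"
  have "emeasure (lborel_Pi {..<d}) ?F = ennreal (2 / real d * unit_ball_vol m * r ^ m)"
    using emeasure_lborel_Pi_oblique_cylinder[of "{..<d}" 0 \<delta> r "- (1 / real d)" "1 / real d" "\<lambda>_. 0"] d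
    by (simp add: d_def \<delta>_def)
  moreover have "?F \<subseteq> unit_ball d"
  proof
    fix x assume x: "x \<in> ?F"
    then have "\<bar>x 0\<bar> \<le> 1 / real d"
      using sum_\<delta>[of x] by auto
    then have x0: "(x 0)\<^sup>2 \<le> (1 / real d)\<^sup>2"
      using power_mono[of "\<bar>x 0\<bar>" "1 / real d" 2] by simp
    have "(\<Sum>i<d. (x i)\<^sup>2) = (x 0)\<^sup>2 + (\<Sum>i\<in>{..<d} - {0}. (x i)\<^sup>2)"
      by (rule sum.remove) (auto simp: d_def)
    also have "\<dots> \<le> (1 / real d)\<^sup>2 + r\<^sup>2"
      using x x0 by (intro add_mono) auto
    also have "\<dots> = 1"
      using d by (simp add: r_def power_divide)
    finally show "x \<in> unit_ball d"
      using x by (simp add: unit_ball_def space_lborel_Pi_lessThan)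
  qed
  then have "emeasure (lborel_Pi {..<d}) ?F \<le> emeasure (lborel_Pi {..<d}) (unit_ball d)"
    by (rule emeasure_mono) (rule sets_unit_ball)
  ultimately have "2 * r ^ m * unit_ball_vol m \<le> real d * unit_ball_vol d"
    using d by (simp add: emeasure_unit_ball field_simps)
  moreover have "1 * unit_ball_vol m \<le> 2 * r ^ m * unit_ball_vol m"
    using power_sqrt_one_minus_inverse_square_ge[of m]
    by (intro mult_right_mono) (auto simp: r_def d_def)
  ultimately show ?thesis
    unfolding d_def by linarith
qed simp

section \<open>Caps\<close>

definition cap :: "nat \<Rightarrow> (nat \<Rightarrow> real) \<Rightarrow> real \<Rightarrow> (nat \<Rightarrow> real) set" where
  "cap d v h = {x \<in> unit_ball d. 1 - h \<le> (\<Sum>i<d. x i * v i)}"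

lemma sets_cap: "cap d v h \<in> sets (lborel_Pi {..<d})"
  unfolding cap_def unit_ball_def space_lborel_Pi_lessThan[symmetric] by measurable

lemma inner_near_one_bounds:
  fixes x v :: "'i \<Rightarrow> real"
  assumes "(\<Sum>i\<in>A. (x i)\<^sup>2) \<le> 1" "(\<Sum>i\<in>A. (v i)\<^sup>2) \<le> 1" "1 - h \<le> (\<Sum>i\<in>A. x i * v i)"
  shows "(\<Sum>i\<in>A. (x i - v i)\<^sup>2) \<le> 2 * h" "(\<Sum>i\<in>A. x i * v i) \<le> 1" "1 - 2 * h \<le> (\<Sum>i\<in>A. (v i)\<^sup>2)"
proof -
  have "(\<Sum>i\<in>A. (x i - v i)\<^sup>2) = (\<Sum>i\<in>A. (x i)\<^sup>2) - 2 * (\<Sum>i\<in>A. x i * v i) + (\<Sum>i\<in>A. (v i)\<^sup>2)"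
    by (simp add: power2_diff sum.distrib sum_subtractf sum_distrib_left mult.assoc)
  moreover have "0 \<le> (\<Sum>i\<in>A. (x i - v i)\<^sup>2)"
    by (simp add: sum_nonneg)
  ultimately show "(\<Sum>i\<in>A. (x i - v i)\<^sup>2) \<le> 2 * h" "(\<Sum>i\<in>A. x i * v i) \<le> 1"
    "1 - 2 * h \<le> (\<Sum>i\<in>A. (v i)\<^sup>2)"
    using assms by linarith+
qed

lemma exists_dominant_coordinate:
  fixes v :: "'i \<Rightarrow> real"
  assumes "finite A" "A \<noteq> {}"
  shows "\<exists>j\<in>A. (\<Sum>i\<in>A. (v i)\<^sup>2) \<le> real (card A) * (v j)\<^sup>2"
proof -
  have "Max ((\<lambda>i. (v i)\<^sup>2) ` A) \<in> (\<lambda>i. (v i)\<^sup>2) ` A"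
    using assms by simp
  then obtain j where j: "j \<in> A" "(v j)\<^sup>2 = Max ((\<lambda>i. (v i)\<^sup>2) ` A)"
    by auto
  then have "(\<Sum>i\<in>A. (v i)\<^sup>2) \<le> real (card A) * (v j)\<^sup>2"
    using assms(1) by (intro sum_bounded_above) simp
  with j(1) show ?thesis ..
qed

lemma cap_nonempty_imp_large_coordinate:
  assumes d: "d \<ge> 2" and h: "h \<le> 1 / 4" and v: "(\<Sum>i<d. (v i)\<^sup>2) \<le> 1"
    and "cap d v h \<noteq> {}"
  shows "\<exists>j<d. 1 / (2 * real d) \<le> \<bar>v j\<bar>"
proof -
  obtain x where "x \<in> cap d v h"
    using assms(4) by blast
  then have "1 / 2 \<le> (\<Sum>i<d. (v i)\<^sup>2)"
    using inner_near_one_bounds(3)[OF _ v] h by (force simp: cap_def unit_ball_def)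
  moreover obtain j where j: "j < d" "(\<Sum>i<d. (v i)\<^sup>2) \<le> real d * (v j)\<^sup>2"
    using exists_dominant_coordinate[of "{..<d}" v] d by (auto simp: lessThan_empty_iff)
  ultimately have "1 / (2 * real d) \<le> (v j)\<^sup>2"
    using d by (simp add: field_simps)
  moreover have "(1 / (2 * real d))\<^sup>2 \<le> 1 / (2 * real d)"
    using power_decreasing[of 1 2 "1 / (2 * real d)"] d by simp
  ultimately have "(1 / (2 * real d))\<^sup>2 \<le> (v j)\<^sup>2"
    by linarith
  then have "1 / (2 * real d) \<le> \<bar>v j\<bar>"
    using abs_le_square_iff[of "1 / (2 * real d)" "v j"] by simp
  with j(1) show ?thesis
    by blast
qed

text \<open>A cap at height \<open>1 - h\<close> lies within distance \<open>sqrt (2 * h)\<close> of \<open>v\<close>. Projecting along an axis \<open>j\<close>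
  with \<open>\<bar>v j\<bar> \<ge> 1 / (2 * d)\<close>, it fits into a cylinder with base a \<open>(d - 1)\<close>-ball of radius
  \<open>sqrt (2 * h)\<close> and axial length \<open>h / \<bar>v j\<bar> \<le> 2 * d * h\<close>.\<close>

lemma measure_cap_le:
  assumes d: "d \<ge> 2" and h: "0 < h" "h \<le> 1 / 4" and v: "(\<Sum>i<d. (v i)\<^sup>2) \<le> 1"
  shows "measure (lborel_Pi {..<d}) (cap d v h) \<le> 2 * real d ^ 2 * h * sqrt (2 * h) ^ (d - 1) * unit_ball_vol d"
proof (cases "cap d v h = {}")
  case False
  then obtain j where j: "j < d" "1 / (2 * real d) \<le> \<bar>v j\<bar>"
    using cap_nonempty_imp_large_coordinate[OF d h(2) v] by blast
  then have "v j \<noteq> 0"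
    using d by auto
  have "h / \<bar>v j\<bar> \<le> h / (1 / (2 * real d))"
    using j \<open>v j \<noteq> 0\<close> d h by (intro divide_left_mono) auto
  then have height: "h / \<bar>v j\<bar> \<le> 2 * real d * h"
    by (simp add: mult.commute)
  let ?E = "{x \<in> space (lborel_Pi {..<d}). (\<Sum>i\<in>{..<d} - {j}. (x i - v i)\<^sup>2) \<le> (sqrt (2 * h))\<^sup>2 \<and>
     1 - h \<le> (\<Sum>i\<in>{..<d}. x i * v i) \<and> (\<Sum>i\<in>{..<d}. x i * v i) \<le> 1}"
  have cap_sub: "cap d v h \<subseteq> ?E"
  proof
    fix x assume x: "x \<in> cap d v h"
    then have "(\<Sum>i<d. (x i - v i)\<^sup>2) \<le> 2 * h" "(\<Sum>i<d. x i * v i) \<le> 1"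
      using inner_near_one_bounds(1,2)[OF _ v] by (auto simp: cap_def unit_ball_def)
    moreover have "(\<Sum>i\<in>{..<d} - {j}. (x i - v i)\<^sup>2) \<le> (\<Sum>i<d. (x i - v i)\<^sup>2)"
      by (intro sum_mono2) auto
    ultimately show "x \<in> ?E"
      using x h by (auto simp: cap_def unit_ball_def space_lborel_Pi_lessThan)
  qed
  have "emeasure (lborel_Pi {..<d}) ?E = ennreal (h / \<bar>v j\<bar> * unit_ball_vol (d - 1) * sqrt (2 * h) ^ (d - 1))"
    using emeasure_lborel_Pi_oblique_cylinder[of "{..<d}" j v "sqrt (2 * h)" "1 - h" 1 v] j \<open>v j \<noteq> 0\<close> h
    by simp
  then have "measure (lborel_Pi {..<d}) (cap d v h) \<le> h / \<bar>v j\<bar> * unit_ball_vol (d - 1) * sqrt (2 * h) ^ (d - 1)"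
    using measure_mono_fmeasurable[OF cap_sub sets_cap] h by (simp add: fmeasurable_def measure_def)
  also have "\<dots> \<le> (2 * real d * h) * (real d * unit_ball_vol d) * sqrt (2 * h) ^ (d - 1)"
    using height unit_ball_vol_le_Suc[of "d - 1"] d h
    by (intro mult_right_mono mult_mono) (auto simp: Suc_diff_le of_nat_diff)
  finally show ?thesis
    by (simp add: power2_eq_square mult_ac)
qed (use h in simp)

section \<open>Covering a polytope by caps\<close>

lemma vertex_in_conv_hull:
  assumes "finite V" "V \<subseteq> Rd d" "v \<in> V"
  shows "v \<in> conv_hull d V"
proof -
  have "(\<Sum>u\<in>V. (if u = v then 1 else 0) * u i) = v i" for i
  proof -
    have "(\<Sum>u\<in>V. (if u = v then 1 else 0) * u i) = (\<Sum>u\<in>V. if u = v then v i else 0)"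
      by (rule sum.cong) auto
    then show ?thesis
      using assms(1,3) by simp
  qed
  then show ?thesis
    using assms unfolding conv_hull_def
    by (intro CollectI conjI exI[of _ "\<lambda>u. if u = v then 1 else 0"]) auto
qed

lemma conv_hull_exists_vertex_inner_ge:
  assumes "x \<in> conv_hull d V" "finite V"
  shows "\<exists>v\<in>V. (\<Sum>i<d. (x i)\<^sup>2) \<le> (\<Sum>i<d. x i * v i)"
proof -
  obtain w where w: "\<forall>v\<in>V. 0 \<le> w v" "(\<Sum>v\<in>V. w v) = 1" "\<forall>i<d. x i = (\<Sum>v\<in>V. w v * v i)"
    using assms(1) unfolding conv_hull_def by blast
  then have "V \<noteq> {}"
    by auto
  then obtain v where v: "v \<in> V" "Max ((\<lambda>u. \<Sum>i<d. x i * u i) ` V) = (\<Sum>i<d. x i * v i)"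
    using obtains_MAX[OF assms(2), of "\<lambda>u. \<Sum>i<d. x i * u i"] by blast
  have v_max: "(\<Sum>i<d. x i * u i) \<le> (\<Sum>i<d. x i * v i)" if "u \<in> V" for u
    unfolding v(2)[symmetric] using that assms(2) by (intro Max_ge) auto
  have "(\<Sum>i<d. (x i)\<^sup>2) = (\<Sum>i<d. x i * (\<Sum>u\<in>V. w u * u i))"
    using w(3) by (intro sum.cong) (auto simp: power2_eq_square)
  also have "\<dots> = (\<Sum>u\<in>V. w u * (\<Sum>i<d. x i * u i))"
    by (simp add: sum_distrib_left sum.swap[of _ V] mult_ac)
  also have "\<dots> \<le> (\<Sum>u\<in>V. w u * (\<Sum>i<d. x i * v i))"
    using w(1) by (intro sum_mono mult_left_mono v_max) auto
  also have "\<dots> = (\<Sum>i<d. x i * v i)"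
    using w(2) by (simp add: sum_distrib_right[symmetric])
  finally show ?thesis
    using v(1) by blast
qed

lemma conv_hull_subset_inner_ball_union_caps:
  assumes "conv_hull d V \<subseteq> unit_ball d" "finite V"
  shows "conv_hull d V \<subseteq> {x \<in> Rd d. (\<Sum>i<d. (x i)\<^sup>2) \<le> 1 - h} \<union> (\<Union>v\<in>V. cap d v h)"
proof
  fix x assume x: "x \<in> conv_hull d V"
  show "x \<in> {x \<in> Rd d. (\<Sum>i<d. (x i)\<^sup>2) \<le> 1 - h} \<union> (\<Union>v\<in>V. cap d v h)"
  proof (cases "(\<Sum>i<d. (x i)\<^sup>2) \<le> 1 - h")
    case True
    with x show ?thesis
      by (simp add: conv_hull_def)
  next
    case False
    obtain v where "v \<in> V" "(\<Sum>i<d. (x i)\<^sup>2) \<le> (\<Sum>i<d. x i * v i)"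
      using conv_hull_exists_vertex_inner_ge[OF x assms(2)] by blast
    with False x assms(1) have "x \<in> cap d v h"
      by (auto simp: cap_def)
    with \<open>v \<in> V\<close> show ?thesis
      by blast
  qed
qed

lemma vol_conv_hull_le:
  assumes d: "d \<ge> 2" and h: "0 < h" "h \<le> 1 / 4"
    and V: "finite V" "V \<subseteq> Rd d" "conv_hull d V \<subseteq> unit_ball d"
  shows "vol d (conv_hull d V) \<le>
    unit_ball_vol d * (sqrt (1 - h) ^ d + real (card V) * (2 * real d ^ 2 * h * sqrt (2 * h) ^ (d - 1)))"
proof -
  let ?M = "lborel_Pi {..<d}"
  let ?inner = "{x \<in> Rd d. (\<Sum>i<d. (x i)\<^sup>2) \<le> (sqrt (1 - h))\<^sup>2}"
  let ?cover = "?inner \<union> (\<Union>v\<in>V. cap d v h)"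
  have sets_inner: "?inner \<in> sets ?M"
    unfolding space_lborel_Pi_lessThan[symmetric] by measurable
  have "emeasure ?M ?inner = ennreal (unit_ball_vol d * sqrt (1 - h) ^ d)"
    using h by (intro emeasure_centered_ball) simp
  then have measure_inner: "measure ?M ?inner = unit_ball_vol d * sqrt (1 - h) ^ d"
    using h by (simp add: measure_def)
  have "unit_ball d \<in> fmeasurable ?M"
    using emeasure_unit_ball[of d] sets_unit_ball by (simp add: fmeasurable_def)
  moreover have "?cover \<subseteq> unit_ball d"
    using h by (auto simp: cap_def unit_ball_def)
  ultimately have cover_fin: "?cover \<in> fmeasurable ?M"
    by (rule fmeasurableI2) (intro sets.Un sets.finite_UN sets_inner sets_cap V(1))
  have cover: "conv_hull d V \<subseteq> ?cover"
    using conv_hull_subset_inner_ball_union_caps[OF V(3,1), of h] h by simp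
  have "vol d (conv_hull d V) \<le> measure ?M ?cover"
  proof (cases "conv_hull d V \<in> sets ?M")
    case True
    then show ?thesis
      unfolding vol_eq_measure by (rule measure_mono_fmeasurable[OF cover _ cover_fin])
  next
    case False
    then show ?thesis
      by (simp add: vol_eq_measure measure_notin_sets)
  qed
  also have "\<dots> \<le> measure ?M ?inner + measure ?M (\<Union>v\<in>V. cap d v h)"
    by (rule measure_Un_le) (use sets_inner sets_cap V(1) in auto)
  also have "measure ?M (\<Union>v\<in>V. cap d v h) \<le> (\<Sum>v\<in>V. measure ?M (cap d v h))"
    by (rule measure_UNION_le) (use V(1) sets_cap in auto)
  also have "(\<Sum>v\<in>V. measure ?M (cap d v h)) \<le> real (card V) * (2 * real d ^ 2 * h * sqrt (2 * h) ^ (d - 1) * unit_ball_vol d)"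
  proof (rule sum_bounded_above)
    fix v assume "v \<in> V"
    then have "v \<in> unit_ball d"
      using vertex_in_conv_hull[OF V(1,2)] V(3) by blast
    then show "measure ?M (cap d v h) \<le> 2 * real d ^ 2 * h * sqrt (2 * h) ^ (d - 1) * unit_ball_vol d"
      using measure_cap_le[OF d h] by (simp add: unit_ball_def)
  qed
  finally show ?thesis
    unfolding measure_inner by (simp add: algebra_simps)
qed

section \<open>Choosing the cap height\<close>

lemma one_minus_sqrt_power_ge:
  fixes h :: real
  assumes h: "0 \<le> h" "real d * h \<le> 1"
  shows "real d * h / 4 \<le> 1 - sqrt (1 - h) ^ d"
proof (cases "d = 0")
  case False
  then have "h \<le> 1"
    using h mult_right_mono[of 1 "real d" h] by simp
  have "sqrt (1 - h) \<le> 1 - h / 2"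
    using h \<open>h \<le> 1\<close> by (subst real_sqrt_le_iff') (auto simp: power2_eq_square field_simps)
  then have "sqrt (1 - h) ^ d \<le> (1 - h / 2) ^ d"
    using \<open>h \<le> 1\<close> by (intro power_mono) auto
  also have "\<dots> \<le> 1 / (1 + h / 2) ^ d"
  proof -
    have "(1 - h / 2) ^ d * (1 + h / 2) ^ d = (1 - h\<^sup>2 / 4) ^ d"
      by (simp add: power_mult_distrib[symmetric] power2_eq_square field_simps)
    also have "\<dots> \<le> 1"
      using h \<open>h \<le> 1\<close> mult_le_one[of h h] by (intro power_le_one) (auto simp: power2_eq_square)
    finally show ?thesis
      using h by (simp add: le_divide_eq)
  qed
  also have "\<dots> \<le> 1 / (1 + real d * (h / 2))"
    using Bernoulli_inequality[of "h / 2" d] h by (intro frac_le) (auto intro: add_pos_nonneg)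
  also have "\<dots> \<le> 1 - real d * h / 4"
  proof -
    define y where "y = real d * h"
    have y: "0 \<le> y" "y * y \<le> y"
      using h by (auto simp: y_def intro: mult_left_le)
    have "(1 - y / 4) * (1 + y / 2) = 1 + y / 4 - y * y / 8"
      by (simp add: algebra_simps)
    with y have "1 \<le> (1 - y / 4) * (1 + y / 2)"
      by linarith
    moreover have "0 < 1 + y / 2"
      using y by simp
    ultimately show ?thesis
      by (simp add: y_def divide_le_eq)
  qed
  finally show ?thesis
    by linarith
qed simp

lemma sqrt_powr_power:
  fixes x :: real
  assumes "0 < x" "0 < m"
  shows "sqrt (x powr (- 2 / real m)) ^ m = 1 / x"
proof -
  have "sqrt (x powr (- 2 / real m)) = x powr (- 1 / real m)"
    using assms(1) by (simp add: powr_half_sqrt[symmetric] powr_powr)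
  also have "\<dots> ^ m = x powr (- 1 / real m * real m)"
    using assms by (simp add: powr_realpow[symmetric] powr_powr)
  finally show ?thesis
    using assms by (simp add: powr_minus_divide)
qed

lemma powr_neg_le_inverse:
  fixes x y m :: real
  assumes "0 < y" "0 < m" "y powr (m / 2) \<le> x"
  shows "x powr (- 2 / m) \<le> 1 / y"
proof -
  have "y = (y powr (m / 2)) powr (2 / m)"
    using assms by (simp add: powr_powr)
  also have "\<dots> \<le> x powr (2 / m)"
    using assms by (intro powr_mono2) auto
  finally have "y \<le> x powr (2 / m)" .
  then show ?thesis
    using assms by (simp add: powr_minus_divide frac_le)
qed

lemma mult_16_le_power_64: "d \<ge> 2 \<Longrightarrow> 16 * real d \<le> 64 ^ (d - 1)"
proof (induction d rule: dec_induct)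
  case (step k)
  then show ?case
    by (cases k) auto
qed simp

lemma vol_unit_ball_diff_polytope_ge:
  assumes d: "d \<ge> 2" and n: "real d powr ((real d - 1) / 2) \<le> real n"
    and P: "polytope_n_vertices d P n" "P \<subseteq> unit_ball d"
  shows "real d * unit_ball_vol d * real n powr (- 2 / (real d - 1)) / 65536 \<le>
    vol d (unit_ball d) - vol d P"
proof -
  obtain V where V: "finite V" "card V = n" "V \<subseteq> Rd d" "P = conv_hull d V"
    using P(1) unfolding polytope_n_vertices_def by blast
  define q where "q = real n powr (- 2 / (real d - 1))"
  define h where "h = q / 8192"
  have "0 < real d powr ((real d - 1) / 2)"
    using d by simp
  with n have n_pos: "0 < real n"
    by linarith
  have q_le: "q \<le> 1 / real d"
    unfolding q_def using n d by (intro powr_neg_le_inverse) auto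
  then have "real d * q \<le> 1"
    using d by (simp add: field_simps)
  moreover have "q \<le> 1"
    using q_le order_trans[of q "1 / real d" 1] d by simp
  moreover have "0 < q"
    using n_pos by (simp add: q_def)
  ultimately have h: "0 < h" "h \<le> 1 / 4" "real d * h \<le> 1 / 8192"
    by (auto simp: h_def)
  have "sqrt q ^ (d - 1) = 1 / real n"
    using sqrt_powr_power[OF n_pos, of "d - 1"] d by (simp add: q_def of_nat_diff)
  then have cap_height: "sqrt (2 * h) ^ (d - 1) = 1 / (real n * 64 ^ (d - 1))"
    by (simp add: h_def real_sqrt_divide power_divide)
  have caps: "2 * real d ^ 2 * h / 64 ^ (d - 1) \<le> real d * h / 8"
    using mult_16_le_power_64[OF d] h by (simp add: field_simps power2_eq_square mult_left_mono)
  have n_caps: "real n * (2 * real d ^ 2 * h * sqrt (2 * h) ^ (d - 1)) = 2 * real d ^ 2 * h / 64 ^ (d - 1)"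
    unfolding cap_height using n_pos by simp
  have "vol d P \<le> unit_ball_vol d * (sqrt (1 - h) ^ d + real n * (2 * real d ^ 2 * h * sqrt (2 * h) ^ (d - 1)))"
    using vol_conv_hull_le[OF d h(1,2) V(1,3)] P(2) V(2,4) by simp
  also have "\<dots> = unit_ball_vol d * (sqrt (1 - h) ^ d + 2 * real d ^ 2 * h / 64 ^ (d - 1))"
    unfolding n_caps ..
  also have "\<dots> \<le> unit_ball_vol d * (1 - real d * h / 8)"
    using caps one_minus_sqrt_power_ge[of h d] h by (intro mult_left_mono) auto
  finally show ?thesis
    by (simp add: vol_unit_ball h_def q_def algebra_simps)
qed

theorem theorem1:
  shows "\<exists>c1>0. \<exists>c2>0. \<forall>d::nat. \<forall>n::nat. \<forall>P.
    d \<ge> 2 \<longrightarrow> real n \<ge> (c1 * real d) powr ((real d - 1) / 2) \<longrightarrow>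
    polytope_n_vertices d P n \<longrightarrow> P \<subseteq> unit_ball d \<longrightarrow>
    vol d (unit_ball d) - vol d P \<ge>
      c2 * real d * vol d (unit_ball d) * real n powr (- 2 / (real d - 1))"
proof -
  have "\<forall>d n P. d \<ge> 2 \<longrightarrow> real n \<ge> (1 * real d) powr ((real d - 1) / 2) \<longrightarrow>
    polytope_n_vertices d P n \<longrightarrow> P \<subseteq> unit_ball d \<longrightarrow>
    vol d (unit_ball d) - vol d P \<ge>
      1 / 65536 * real d * vol d (unit_ball d) * real n powr (- 2 / (real d - 1))"
    using vol_unit_ball_diff_polytope_ge by (simp add: vol_unit_ball)
  moreover have "(1::real) > 0" "1 / 65536 > (0::real)"
    by simp_all
  ultimately show ?thesis
    by blast
qed

end
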